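(* For integers $b\ge 0$ let $I_b=\{1,3,5,\ldots,2b+1\}$ (so $I_0=\{1\}$ and $s(I_b)=b$). Then the numbers $C_a(I_b)$, $0\le a\le b$, satisfy: (1) $C_0(\{1\})=1$; (2) for all integers $b\ge a\ge 1$, $$C_a(I_b)=(2a-1)!!\sum_{i=a-1}^{b-1}\left(C_i(I_{b-1})\cdot\frac{(2b+1)!!}{(2i+3)!!}\right);$$ (3) for all integers $b\ge 1$, $C_0(I_b)=C_1(I_b)$.
   Context: Partitions are drawn as Young diagrams $\mathbb{D}(\lambda)$ in English notation; $c_{i,j}$ is the cell in row $i$, column $j$. The hook length $h_\lambda(c)$ is the number of cells of $\mathbb{D}(\lambda)$ weakly right of $c$ in its row or weakly below $c$ in its column (counting $c$ once). For $\mu\subseteq\lambda$, an excited diagram of $\lambda/\mu$ is a subset of $\mathbb{D}(\lambda)$ obtained from $\mathbb{D}(\mu)$ by repeatedly replacing a cell $c_{i,j}\in D$ by $c_{i+1,j+1}$, allowed iff $c_{i+1,j+1}\in\mathbb{D}(\lambda)$ and none of $c_{i,j+1},c_{i+1,j},c_{i+1,j+1}$ lies in $D$; $\mathbb{E}(\lambda/\mu)$ is their set. A ribbon with $n$ cells is read from its lower-left to its upper-right cell, each successive cell directly right of or directly above the previous; it corresponds to the set of $i\in\{1,\ldots,n-1\}$ with cell $i$ directly below cell $i+1$. A descent set is a non-empty finite set $I$ of positive integers; $\lambda^I$ is the unique partition with $\lambda^I_1=\lambda^I_2$ such that the cells $c_{i,j}\in\mathbb{D}(\lambda^I)$ with fewer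 than three of $c_{i,j+1},c_{i+1,j},c_{i+1,j+1}$ in $\mathbb{D}(\lambda^I)$ form a ribbon corresponding to $I$; this ribbon is $\mathbb{D}(\lambda^I)\setminus\mathbb{D}(\mu^I)$ for a partition $\mu^I$. Let $s(I)=\lambda^I_1-1$. Naruse-Newton coefficients: every excited diagram of $\lambda^I/\mu^I$ meets row 1 in $\{c_{1,1},\ldots,c_{1,r}\}$, $0\le r\le s$; for $0\le j\le s(I)$, $C_j(I)=\sum_D\prod_{c\in D,\,c\notin\text{row }1}h_{\lambda^I}(c)$, summed over $D\in\mathbb{E}(\lambda^I/\mu^I)$ with exactly $s-j$ cells in row 1. For a positive integer $x$, $x!!=\prod_{i=0}^{\lceil x/2\rceil-1}(x-2i)$. *)

theory Defs
  imports Complex_Main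
begin

type_synonym cell = "nat \<times> nat"   (* (row, column), 1-indexed, English notation *)

definition is_partition :: "nat list \<Rightarrow> bool" where
  "is_partition lam \<longleftrightarrow> sorted (rev lam) \<and> (\<forall>x\<in>set lam. 0 < x)"

definition diagram :: "nat list \<Rightarrow> cell set" where
  "diagram lam = {(i, j). 1 \<le> i \<and> i \<le> length lam \<and> 1 \<le> j \<and> j \<le> lam ! (i - 1)}"

definition hook :: "nat list \<Rightarrow> cell \<Rightarrow> nat" where
  "hook lam c = card {d \<in> diagram lam.
      (fst d = fst c \<and> snd d \<ge> snd c) \<or> (snd d = snd c \<and> fst d \<ge> fst c)}"

inductive_set excited :: "nat list \<Rightarrow> nat list \<Rightarrow> cell set set" for lam mu where
  base: "diagram mu \<in> excited lam mu"
| step: "\<lbrakk>D \<in> excited lam mu; (i, j) \<in> D; (i + 1, j + 1) \<in> diagram lam;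
          (i, j + 1) \<notin> D; (i + 1, j) \<notin> D; (i + 1, j + 1) \<notin> D\<rbrakk>
         \<Longrightarrow> (D - {(i, j)}) \<union> {(i + 1, j + 1)} \<in> excited lam mu"

definition directly_below :: "cell \<Rightarrow> cell \<Rightarrow> bool" where
  "directly_below a b \<longleftrightarrow> fst a = fst b + 1 \<and> snd a = snd b"

definition directly_right :: "cell \<Rightarrow> cell \<Rightarrow> bool" where
  "directly_right b a \<longleftrightarrow> fst b = fst a \<and> snd b = snd a + 1"

(* R is a ribbon (read lower-left to upper-right as p 1, ..., p n) corresponding to I *)
definition ribbon_corresponds :: "cell set \<Rightarrow> nat set \<Rightarrow> bool" where
  "ribbon_corresponds R I \<longleftrightarrow> (\<exists>n p. 1 \<le> n \<and> inj_on p {1..n} \<and> R = p ` {1..n} \<and>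
      (\<forall>k\<in>{1..<n}. directly_right (p (k + 1)) (p k) \<or> directly_below (p k) (p (k + 1))) \<and>
      I = {k \<in> {1..<n}. directly_below (p k) (p (k + 1))})"

definition rim :: "nat list \<Rightarrow> cell set" where
  "rim lam = {c \<in> diagram lam.
      card ({(fst c, snd c + 1), (fst c + 1, snd c), (fst c + 1, snd c + 1)} \<inter> diagram lam) < 3}"

definition lamI :: "nat set \<Rightarrow> nat list" where
  "lamI I = (THE lam. is_partition lam \<and> 2 \<le> length lam \<and> lam ! 0 = lam ! 1 \<and>
                      ribbon_corresponds (rim lam) I)"

definition muI :: "nat set \<Rightarrow> nat list" where
  "muI I = (THE mu. is_partition mu \<and> diagram mu \<subseteq> diagram (lamI I) \<and>
                    diagram (lamI I) - diagram mu = rim (lamI I))"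

definition sI :: "nat set \<Rightarrow> nat" where
  "sI I = lamI I ! 0 - 1"

definition NNcoeff :: "nat \<Rightarrow> nat set \<Rightarrow> nat" where
  "NNcoeff j I = (\<Sum>D \<in> {D \<in> excited (lamI I) (muI I). card {c \<in> D. fst c = 1} = sI I - j}.
                    \<Prod>c \<in> {c \<in> D. fst c \<noteq> 1}. hook (lamI I) c)"

definition dfact :: "nat \<Rightarrow> nat" where
  "dfact x = (\<Prod>i<(x + 1) div 2. x - 2 * i)"

definition Iodd :: "nat \<Rightarrow> nat set" where
  "Iodd b = (\<lambda>k. 2 * k + 1) ` {0..b}"

end

theory Submission
  imports Defs
begin

text \<open>
  For \<open>I = I\<^sub>b\<close> the partition \<open>\<lambda>\<^sup>I\<close> is \<open>(b+1, b+1, b, \<dots>, 1)\<close> and \<open>\<mu>\<^sup>I\<close> is the staircase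
  \<open>(b, \<dots>, 1)\<close>: a ribbon path is determined by its descent set and its last cell, and a partition
  by its rim. A cell \<open>(i, j)\<close> of \<open>\<lambda>\<^sup>I\<close> below the first row has hook length \<open>2(b+3-i-j)+1\<close>.

  An excited diagram of \<open>\<lambda>\<^sup>I/\<mu>\<^sup>I\<close> is described by the interval of columns missing from each
  row; these intervals are bounded by a weakly decreasing sequence, dominated by that of the
  staircase. Deleting the first row and moving the other cells up one row is a bijection onto the
  excited diagrams for \<open>I\<^bsub>b-1\<^esub>\<close>, up to the choice of the first gap. The second row leaves the
  weight when it becomes the first row, and if the two diagrams have \<open>b - a\<close> and \<open>b - 1 - m\<close>
  cells in their first rows, its hook lengths multiply to \<open>(2a-1)!! (2b+1)!! / (2m+3)!!\<close>.
  This gives (2), and (3) because \<open>(2a-1)!! = 1\<close> for both \<open>a = 0\<close> and \<open>a = 1\<close>.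
\<close>

section \<open>Partitions, rims and ribbon paths\<close>

lemma is_partition_antimono:
  assumes "is_partition lam" "i \<le> j" "j < length lam"
  shows "lam ! j \<le> lam ! i"
proof -
  have "sorted (rev lam)" using assms(1) by (simp add: is_partition_def)
  then have "rev lam ! (length lam - 1 - j) \<le> rev lam ! (length lam - 1 - i)"
    using assms by (intro sorted_nth_mono) auto
  then show ?thesis using assms by (simp add: rev_nth)
qed

lemma is_partition_nth_pos:
  assumes "is_partition lam" "k < length lam"
  shows "0 < lam ! k"
  using assms by (auto simp: is_partition_def)

lemma mem_diagram:
  "c \<in> diagram lam \<longleftrightarrow>
     1 \<le> fst c \<and> fst c \<le> length lam \<and> 1 \<le> snd c \<and> snd c \<le> lam ! (fst c - 1)"
  by (cases c) (simp add: diagram_def)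

lemma finite_diagram: "finite (diagram lam)"
proof (rule finite_subset)
  show "diagram lam \<subseteq> {1..length lam} \<times> {1..sum_list lam}"
  proof
    fix c assume c: "c \<in> diagram lam"
    then have "lam ! (fst c - 1) \<le> sum_list lam" by (intro elem_le_sum_list) (auto simp: mem_diagram)
    with c show "c \<in> {1..length lam} \<times> {1..sum_list lam}" by (cases c) (auto simp: mem_diagram)
  qed
qed simp

lemma diagram_down_closed:
  assumes "is_partition lam" "(i', j') \<in> diagram lam" "1 \<le> i" "i \<le> i'" "1 \<le> j" "j \<le> j'"
  shows "(i, j) \<in> diagram lam"
proof -
  have "lam ! (i' - 1) \<le> lam ! (i - 1)"
    using assms by (intro is_partition_antimono) (auto simp: mem_diagram)
  then show ?thesis using assms by (auto simp: mem_diagram)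
qed

lemma inj_on_diagram: "inj_on diagram {lam. is_partition lam}"
proof (rule inj_onI, simp)
  have column: "{i. (i, 1) \<in> diagram lam} = {1..length lam}" if "is_partition lam" for lam
    using is_partition_nth_pos[OF that] by (auto simp: mem_diagram Suc_le_eq)
  have row: "{j. (Suc k, j) \<in> diagram lam} = {1..lam ! k}" if "k < length lam" for lam k
    using that by (auto simp: mem_diagram)
  fix lam mu assume lam: "is_partition lam" and mu: "is_partition mu"
    and eq: "diagram lam = diagram mu"
  then have len: "length lam = length mu"
    using column[OF lam] column[OF mu] by (metis card_atLeastAtMost diff_Suc_1)
  show "lam = mu"
  proof (rule nth_equalityI[OF len])
    fix k assume "k < length lam"
    then show "lam ! k = mu ! k"
      using row[of k lam] row[of k mu] len eq by (metis card_atLeastAtMost diff_Suc_1)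
  qed
qed

lemma mem_rim:
  assumes "is_partition lam"
  shows "(i, j) \<in> rim lam \<longleftrightarrow> (i, j) \<in> diagram lam \<and> (i + 1, j + 1) \<notin> diagram lam"
proof
  assume c: "(i, j) \<in> rim lam"
  then have ij: "(i, j) \<in> diagram lam" by (simp add: rim_def)
  moreover have "(i + 1, j + 1) \<notin> diagram lam"
  proof
    assume corner: "(i + 1, j + 1) \<in> diagram lam"
    then have "(i, j + 1) \<in> diagram lam" "(i + 1, j) \<in> diagram lam"
      using ij diagram_down_closed[OF assms corner] by (auto simp: mem_diagram)
    with corner have "card ({(i, j + 1), (i + 1, j), (i + 1, j + 1)} \<inter> diagram lam) = 3"
      by (simp add: insert_absorb)
    with c show False by (simp add: rim_def)
  qed
  ultimately show "(i, j) \<in> diagram lam \<and> (i + 1, j + 1) \<notin> diagram lam" ..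
next
  assume c: "(i, j) \<in> diagram lam \<and> (i + 1, j + 1) \<notin> diagram lam"
  then have "card ({(i, j + 1), (i + 1, j), (i + 1, j + 1)} \<inter> diagram lam)
      \<le> card {(i, j + 1), (i + 1, j)}"
    by (intro card_mono) auto
  also have "\<dots> \<le> 2" by (simp add: card_insert_if)
  finally show "(i, j) \<in> rim lam" using c by (simp add: rim_def)
qed

text \<open>Follow the diagonal through a cell down to the rim.\<close>

lemma diagram_eq_down_closure_rim:
  assumes "is_partition lam"
  shows "diagram lam = {(i, j). 1 \<le> i \<and> 1 \<le> j \<and> (\<exists>(i', j') \<in> rim lam. i \<le> i' \<and> j \<le> j')}"
proof (intro set_eqI iffI; clarify)
  fix i j assume c: "(i, j) \<in> diagram lam"
  have "\<exists>d. (i + d + 1, j + d + 1) \<notin> diagram lam"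
    by (rule exI[of _ "length lam"]) (simp add: mem_diagram)
  then obtain d where out: "(i + d + 1, j + d + 1) \<notin> diagram lam"
    and least: "\<And>e. e < d \<Longrightarrow> (i + e + 1, j + e + 1) \<in> diagram lam"
    using exists_least_iff[of "\<lambda>d. (i + d + 1, j + d + 1) \<notin> diagram lam"] by blast
  have "(i + d, j + d) \<in> diagram lam"
    using c least[of "d - 1"] by (cases d) auto
  with out have "(i + d, j + d) \<in> rim lam" by (simp add: mem_rim[OF assms])
  with c show "1 \<le> i \<and> 1 \<le> j \<and> (\<exists>(i', j') \<in> rim lam. i \<le> i' \<and> j \<le> j')"
    by (auto simp: mem_diagram intro!: bexI[of _ "(i + d, j + d)"])
next
  fix i j i' j' assume "1 \<le> i" "1 \<le> j" "(i', j') \<in> rim lam" "i \<le> i'" "j \<le> j'"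
  then show "(i, j) \<in> diagram lam"
    using diagram_down_closed[OF assms] by (auto simp: rim_def)
qed

lemma partition_eq_if_rim_eq:
  assumes "is_partition lam" "is_partition mu" "rim lam = rim mu"
  shows "lam = mu"
  using inj_on_diagram assms diagram_eq_down_closure_rim by (simp add: inj_on_def)

lemma rim_subset_diagram: "rim lam \<subseteq> diagram lam"
  by (auto simp: rim_def)

definition ribbon_path :: "nat \<Rightarrow> (nat \<Rightarrow> cell) \<Rightarrow> nat set \<Rightarrow> bool" where
  "ribbon_path n p I \<longleftrightarrow>
     (\<forall>k\<in>{1..<n}. directly_right (p (k + 1)) (p k) \<or> directly_below (p k) (p (k + 1))) \<and>
     I = {k \<in> {1..<n}. directly_below (p k) (p (k + 1))}"

lemma ribbon_corresponds_iff:
  "ribbon_corresponds R I \<longleftrightarrow>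
     (\<exists>n p. 1 \<le> n \<and> inj_on p {1..n} \<and> R = p ` {1..n} \<and> ribbon_path n p I)"
  by (simp add: ribbon_corresponds_def ribbon_path_def)

lemma ribbon_path_descent:
  assumes "ribbon_path n p I" "k \<in> I"
  shows "k \<in> {1..<n}" "fst (p k) = fst (p (k + 1)) + 1" "snd (p k) = snd (p (k + 1))"
  using assms by (auto simp: ribbon_path_def directly_below_def)

lemma ribbon_path_ascent:
  assumes "ribbon_path n p I" "k \<in> {1..<n}" "k \<notin> I"
  shows "fst (p (k + 1)) = fst (p k)" "snd (p (k + 1)) = snd (p k) + 1"
  using assms by (auto simp: ribbon_path_def directly_right_def)

lemma ribbon_path_prev:
  assumes "ribbon_path n p I" "k \<in> {1..<n}"
  shows "p k = (if k \<in> I then (fst (p (k + 1)) + 1, snd (p (k + 1)))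
                else (fst (p (k + 1)), snd (p (k + 1)) - 1))"
  using ribbon_path_descent[OF assms(1)] ribbon_path_ascent[OF assms] by (simp add: prod_eq_iff)

lemma ribbon_path_eq_from_end:
  assumes "ribbon_path n p I" "ribbon_path n q I" "p n = q n" "k \<in> {1..n}"
  shows "p k = q k"
proof -
  have "k \<le> n" using assms(4) by simp
  then show ?thesis
  proof (induction rule: inc_induct)
    case (step m)
    with assms(4) have "m \<in> {1..<n}" by simp
    then show ?case
      using step.IH ribbon_path_prev[OF assms(1)] ribbon_path_prev[OF assms(2)] by simp
  qed (use assms(3) in simp)
qed

lemma ribbon_path_shift:
  assumes "ribbon_path n p I"
  shows "ribbon_path n (\<lambda>k. (fst (p k), snd (p k) + s)) I"
  using assms by (simp add: ribbon_path_def directly_right_def directly_below_def)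

lemma ribbon_path_in_rim_last:
  assumes "rim lam = p ` {1..n}" "ribbon_path n p I" "k \<in> {1..n}" "p k = (1, lam ! 0)"
  shows "k = n"
proof (rule ccontr)
  assume "k \<noteq> n"
  with assms(3) have k: "k \<in> {1..<n}" by simp
  then have next_cell: "p (k + 1) \<in> diagram lam" using assms(1) rim_subset_diagram by fastforce
  show False
  proof (cases "k \<in> I")
    case True
    then have "fst (p (k + 1)) = 0" using ribbon_path_descent(2)[OF assms(2) True] assms(4) by simp
    with next_cell show False by (simp add: mem_diagram)
  next
    case False
    then have "p (k + 1) = (1, lam ! 0 + 1)"
      using ribbon_path_ascent[OF assms(2) k] assms(4) by (simp add: prod_eq_iff)
    with next_cell show False by (simp add: mem_diagram)
  qed
qed

lemma ribbon_path_in_rim_first: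
  assumes "rim lam = p ` {1..n}" "ribbon_path n p I" "k \<in> {1..n}" "p k = (length lam, 1)"
  shows "k = 1"
proof (rule ccontr)
  assume "k \<noteq> 1"
  with assms(3) obtain m where k: "k = m + 1" and m: "m \<in> {1..<n}"
    by (cases k) auto
  then have prev_cell: "p m \<in> diagram lam" using assms(1) rim_subset_diagram by fastforce
  show False
  proof (cases "m \<in> I")
    case True
    then have "p m = (length lam + 1, 1)"
      using ribbon_path_descent[OF assms(2)] assms(4) k by (simp add: prod_eq_iff)
    with prev_cell show False by (simp add: mem_diagram)
  next
    case False
    then have "snd (p m) = 0" using ribbon_path_ascent(2)[OF assms(2) m] assms(4) k by simp
    with prev_cell show False by (simp add: mem_diagram)
  qed
qed

section \<open>The shape of \<open>I\<^sub>b\<close>\<close>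

definition lam_odd :: "nat \<Rightarrow> nat list" where
  "lam_odd b = (b + 1) # rev [1..<b + 2]"

definition staircase :: "nat \<Rightarrow> nat list" where
  "staircase b = rev [1..<b + 1]"

lemma length_lam_odd [simp]: "length (lam_odd b) = b + 2"
  by (simp add: lam_odd_def)

lemma length_staircase [simp]: "length (staircase b) = b"
  by (simp add: staircase_def)

lemma nth_lam_odd: "k < b + 2 \<Longrightarrow> lam_odd b ! k = (if k = 0 then b + 1 else b + 2 - k)"
  by (cases k) (simp_all add: lam_odd_def rev_nth del: upt_Suc)

lemma nth_staircase: "k < b \<Longrightarrow> staircase b ! k = b - k"
  by (simp add: staircase_def rev_nth del: upt_Suc)

lemma is_partition_lam_odd: "is_partition (lam_odd b)"
  by (simp add: is_partition_def lam_odd_def sorted_append del: upt_Suc)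

lemma is_partition_staircase: "is_partition (staircase b)"
  by (simp add: is_partition_def staircase_def del: upt_Suc)

lemma mem_diagram_lam_odd [simp]:
  "c \<in> diagram (lam_odd b) \<longleftrightarrow>
     1 \<le> fst c \<and> 1 \<le> snd c \<and> snd c \<le> b + 1 \<and> fst c + snd c \<le> b + 3"
  by (auto simp: mem_diagram nth_lam_odd split: if_splits)

lemma mem_diagram_staircase [simp]:
  "c \<in> diagram (staircase b) \<longleftrightarrow> 1 \<le> fst c \<and> 1 \<le> snd c \<and> fst c + snd c \<le> b + 1"
  by (auto simp: mem_diagram nth_staircase)

lemma mem_rim_lam_odd:
  "(i, j) \<in> rim (lam_odd b) \<longleftrightarrow> (i, j) \<in> diagram (lam_odd b) \<and> b + 2 \<le> i + j"
  by (auto simp: mem_rim[OF is_partition_lam_odd])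

lemma mem_Iodd: "k \<in> Iodd b \<longleftrightarrow> k \<in> {1..<2 * b + 2} \<and> odd k"
  unfolding Iodd_def by (auto elim!: oddE)

definition rim_path :: "nat \<Rightarrow> nat \<Rightarrow> cell" where
  "rim_path b k = (b + 2 - k div 2, (k + 1) div 2)"

lemma rim_path_cases:
  obtains (even) m where "k = 2 * m" "rim_path b k = (b + 2 - m, m)"
    | (odd) m where "k = 2 * m + 1" "rim_path b k = (b + 2 - m, m + 1)"
proof (cases "even k")
  case True
  then obtain m where "k = 2 * m" ..
  then show ?thesis by (intro even) (simp_all add: rim_path_def)
next
  case False
  then obtain m where "k = 2 * m + 1" by (rule oddE)
  then show ?thesis by (intro odd) (simp_all add: rim_path_def)
qed

lemma rim_path_inverse: "k \<le> 2 * b + 2 \<Longrightarrow> fst (rim_path b k) + k = b + 2 + snd (rim_path b k)"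
  by (cases rule: rim_path_cases[of k b]) auto

lemma rim_lam_odd: "rim (lam_odd b) = rim_path b ` {1..2 * b + 2}"
proof (intro set_eqI iffI)
  fix c assume c: "c \<in> rim (lam_odd b)"
  obtain i j where ij: "c = (i, j)" by fastforce
  with c have j: "1 \<le> j" "j \<le> b + 1" and "i + j = b + 2 \<or> i + j = b + 3"
    by (auto simp: mem_rim_lam_odd)
  then consider "i + j = b + 2" | "i + j = b + 3" by blast
  then show "c \<in> rim_path b ` {1..2 * b + 2}"
  proof cases
    case 1
    then have "c = rim_path b (2 * j)" by (simp add: ij rim_path_def)
    with j show ?thesis by force
  next
    case 2
    then have "c = rim_path b (2 * (j - 1) + 1)" using j by (simp add: ij rim_path_def)
    with j show ?thesis by force
  qed
next
  fix c assume "c \<in> rim_path b ` {1..2 * b + 2}"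
  then obtain k where "k \<in> {1..2 * b + 2}" "c = rim_path b k" by blast
  then show "c \<in> rim (lam_odd b)"
    by (cases rule: rim_path_cases[of k b]) (auto simp: mem_rim_lam_odd)
qed

lemma inj_on_rim_path: "inj_on (rim_path b) {1..2 * b + 2}"
proof (rule inj_onI)
  fix k l assume "k \<in> {1..2 * b + 2}" "l \<in> {1..2 * b + 2}" "rim_path b k = rim_path b l"
  then show "k = l" using rim_path_inverse[of k b] rim_path_inverse[of l b] by simp
qed

lemma ribbon_path_rim_path: "ribbon_path (2 * b + 2) (rim_path b) (Iodd b)"
proof -
  have step: "if odd k then directly_below (rim_path b k) (rim_path b (k + 1))
      else directly_right (rim_path b (k + 1)) (rim_path b k) \<and>
        \<not> directly_below (rim_path b k) (rim_path b (k + 1))"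
    if "k < 2 * b + 2" for k
  proof (cases rule: rim_path_cases[of k b])
    case (even m)
    then have "rim_path b (k + 1) = (b + 2 - m, m + 1)" by (simp add: rim_path_def)
    with even show ?thesis by (simp add: directly_right_def directly_below_def)
  next
    case (odd m)
    then have "rim_path b (k + 1) = (b + 1 - m, m + 1)" by (simp add: rim_path_def)
    with odd that show ?thesis by (simp add: directly_below_def)
  qed
  then have "\<forall>k\<in>{1..<2 * b + 2}. directly_right (rim_path b (k + 1)) (rim_path b k) \<or>
      directly_below (rim_path b k) (rim_path b (k + 1))"
    by (metis atLeastLessThan_iff)
  moreover have "Iodd b = {k \<in> {1..<2 * b + 2}. directly_below (rim_path b k) (rim_path b (k + 1))}"
  proof (intro set_eqI)
    fix k show "k \<in> Iodd b \<longleftrightarrow> k \<in> {k \<in> {1..<2 * b + 2}. directly_below (rim_path b k) (rim_path b (k + 1))}"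
      using step[of k] by (cases "odd k") (auto simp: mem_Iodd)
  qed
  ultimately show ?thesis
    unfolding ribbon_path_def by blast
qed

lemma ribbon_path_rim_Iodd_ends:
  assumes part: "is_partition lam" and len: "2 \<le> length lam" and top: "lam ! 0 = lam ! 1"
    and inj: "inj_on p {1..n}" and rim: "rim lam = p ` {1..n}"
    and path: "ribbon_path n p (Iodd b)"
  shows "n = 2 * b + 2" "p n = (1, lam ! 0)" "snd (p 1) = 1"
proof -
  define L where "L = lam ! 0"
  have "0 < L" unfolding L_def using len by (intro is_partition_nth_pos[OF part]) linarith
  then have "(1, L) \<in> rim lam"
    using len top by (simp add: mem_rim[OF part] mem_diagram L_def)
  then obtain k where "k \<in> {1..n}" "p k = (1, L)" using rim by auto
  with ribbon_path_in_rim_last[OF rim path] show last: "p n = (1, lam ! 0)"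
    by (auto simp: L_def)
  have "(2, L) \<in> rim lam"
  proof -
    have "lam ! 2 \<le> lam ! 1" if "2 < length lam"
      using is_partition_antimono[OF part, of 1 2] that by simp
    then show ?thesis using len \<open>0 < L\<close> top by (auto simp: mem_rim[OF part] mem_diagram L_def)
  qed
  then obtain k where k: "k \<in> {1..n}" "p k = (2, L)" using rim by auto
  with last have "k \<in> {1..<n}" by (cases "k = n") (auto simp: L_def)
  have "k \<in> Iodd b"
  proof (rule ccontr)
    assume "k \<notin> Iodd b"
    then have "p (k + 1) = (2, L + 1)"
      using ribbon_path_ascent[OF path \<open>k \<in> {1..<n}\<close>] k by (simp add: prod_eq_iff)
    moreover have "p (k + 1) \<in> diagram lam"
      using \<open>k \<in> {1..<n}\<close> rim rim_subset_diagram by fastforce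
    ultimately show False using top by (simp add: mem_diagram L_def)
  qed
  then have "p (k + 1) = p n"
    using ribbon_path_descent[OF path] k last by (simp add: prod_eq_iff L_def)
  with \<open>k \<in> {1..<n}\<close> have "k + 1 = n" by (intro inj_onD[OF inj]) auto
  with \<open>k \<in> Iodd b\<close> show "n = 2 * b + 2"
    using ribbon_path_descent(1)[OF path, of "2 * b + 1"] by (auto simp: mem_Iodd)
  have "0 < lam ! (length lam - 1)" using len by (intro is_partition_nth_pos[OF part]) linarith
  with len have "(length lam, 1) \<in> rim lam" by (simp add: mem_rim[OF part] mem_diagram)
  then obtain k where "k \<in> {1..n}" "p k = (length lam, 1)" using rim by auto
  moreover from this have "k = 1" by (rule ribbon_path_in_rim_first[OF rim path])
  ultimately show "snd (p 1) = 1" by simp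
qed

lemma lam_odd_unique:
  assumes part: "is_partition lam" and len: "2 \<le> length lam" and top: "lam ! 0 = lam ! 1"
    and rib: "ribbon_corresponds (rim lam) (Iodd b)"
  shows "lam = lam_odd b"
proof -
  obtain n p where inj: "inj_on p {1..n}" and rim: "rim lam = p ` {1..n}"
    and path: "ribbon_path n p (Iodd b)"
    using rib by (auto simp: ribbon_corresponds_iff)
  note ends = ribbon_path_rim_Iodd_ends[OF part len top inj rim path]
  have rim_path: "ribbon_path n (rim_path b) (Iodd b)" using ribbon_path_rim_path ends(1) by simp
  have "rim_path b n = (1, b + 1)" by (simp add: ends(1) rim_path_def)
  text \<open>Shifted to end in the same cell, both paths are determined by that cell and their descents.\<close>
  with ends(2) have shifted:
    "(fst (p k), snd (p k) + (b + 1)) = (fst (rim_path b k), snd (rim_path b k) + lam ! 0)"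
    if "k \<in> {1..n}" for k
    by (intro ribbon_path_eq_from_end[OF ribbon_path_shift[OF path]
          ribbon_path_shift[OF rim_path] _ that]) simp
  from shifted[of 1] ends have "lam ! 0 = b + 1" by (simp add: rim_path_def)
  with shifted have "p k = rim_path b k" if "k \<in> {1..n}" for k
    using that by (simp add: prod_eq_iff)
  then have "rim lam = rim (lam_odd b)"
    unfolding rim rim_lam_odd ends(1) by (intro image_cong) simp_all
  then show ?thesis
    by (rule partition_eq_if_rim_eq[OF part is_partition_lam_odd])
qed

lemma lamI_Iodd: "lamI (Iodd b) = lam_odd b"
  unfolding lamI_def
proof (rule the_equality)
  show "is_partition (lam_odd b) \<and> 2 \<le> length (lam_odd b) \<and> lam_odd b ! 0 = lam_odd b ! 1 \<and>
      ribbon_corresponds (rim (lam_odd b)) (Iodd b)"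
    using is_partition_lam_odd ribbon_path_rim_path inj_on_rim_path
    by (auto simp: nth_lam_odd ribbon_corresponds_iff rim_lam_odd intro!: exI[of _ "2 * b + 2"] exI[of _ "rim_path b"])
qed (use lam_odd_unique in blast)

lemma sI_Iodd: "sI (Iodd b) = b"
  by (simp add: sI_def lamI_Iodd nth_lam_odd)

lemma muI_Iodd: "muI (Iodd b) = staircase b"
  unfolding muI_def lamI_Iodd
proof (rule the_equality)
  have rim: "diagram (lam_odd b) - diagram (staircase b) = rim (lam_odd b)"
    by (auto simp: mem_rim_lam_odd)
  have sub: "diagram (staircase b) \<subseteq> diagram (lam_odd b)" by auto
  with rim is_partition_staircase show "is_partition (staircase b) \<and>
      diagram (staircase b) \<subseteq> diagram (lam_odd b) \<and>
      diagram (lam_odd b) - diagram (staircase b) = rim (lam_odd b)"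
    by simp
  fix mu assume mu: "is_partition mu \<and> diagram mu \<subseteq> diagram (lam_odd b) \<and>
      diagram (lam_odd b) - diagram mu = rim (lam_odd b)"
  then have "diagram mu = diagram (staircase b)" using rim sub by blast
  with mu is_partition_staircase show "mu = staircase b"
    using inj_on_diagram by (auto dest: inj_onD)
qed

section \<open>Excited diagrams as gap sequences\<close>

text \<open>Row \<open>i\<close> of an excited diagram of \<open>\<lambda>\<^sup>I/\<mu>\<^sup>I\<close> consists of the cells of row \<open>i\<close> of
  \<open>\<lambda>\<^sup>I\<close> outside the columns \<open>f i, \<dots>, f (i - 1)\<close>, for a sequence \<open>f\<close> with \<open>gap_seq b f\<close>;
  the staircase \<open>\<mu>\<^sup>I\<close> itself has the gaps \<open>staircase_gaps b\<close>, made of the two rim cells of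
  each row.\<close>

definition staircase_gaps :: "nat \<Rightarrow> nat \<Rightarrow> nat" where
  "staircase_gaps b i = (if i = 0 then b + 1 else max 1 (b + 2 - i))"

definition gap_seq :: "nat \<Rightarrow> (nat \<Rightarrow> nat) \<Rightarrow> bool" where
  "gap_seq b f \<longleftrightarrow> f 0 = b + 1 \<and> decseq f \<and> (\<forall>i. 1 \<le> f i \<and> f i \<le> staircase_gaps b i)"

definition gap_diagram :: "nat \<Rightarrow> (nat \<Rightarrow> nat) \<Rightarrow> cell set" where
  "gap_diagram b f = {c \<in> diagram (lam_odd b). snd c < f (fst c) \<or> f (fst c - 1) < snd c}"

lemma gap_seqD:
  assumes "gap_seq b f"
  shows "f 0 = b + 1" "f (Suc i) \<le> f i" "1 \<le> f i" "f i \<le> staircase_gaps b i"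
  using assms by (auto simp: gap_seq_def decseq_Suc_iff)

lemma gap_seq_antimono: "gap_seq b f \<Longrightarrow> i \<le> k \<Longrightarrow> f k \<le> f i"
  by (auto simp: gap_seq_def dest: decseqD)

lemma gap_seq_eq_1: "gap_seq b f \<Longrightarrow> b + 1 \<le> i \<Longrightarrow> f i = 1"
  using gap_seqD(3,4)[of b f i] by (simp add: staircase_gaps_def)

lemma gap_seq_staircase_gaps: "gap_seq b (staircase_gaps b)"
  by (auto simp: gap_seq_def staircase_gaps_def decseq_Suc_iff)

lemma gap_diagram_staircase_gaps: "gap_diagram b (staircase_gaps b) = diagram (staircase b)"
  by (auto simp: gap_diagram_def staircase_gaps_def)

lemma mem_gap_diagram:
  "(i, j) \<in> gap_diagram b f \<longleftrightarrow> (i, j) \<in> diagram (lam_odd b) \<and> (j < f i \<or> f (i - 1) < j)"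
  by (simp add: gap_diagram_def)

lemma gap_diagram_subset: "gap_diagram b f \<subseteq> diagram (lam_odd b)"
  by (auto simp: gap_diagram_def)

lemma finite_gap_diagram: "finite (gap_diagram b f)"
  using finite_subset[OF gap_diagram_subset finite_diagram] .

lemma excited_move_gap_diagram:
  assumes f: "gap_seq b f" and c: "(i, j) \<in> gap_diagram b f"
    and corner: "(i + 1, j + 1) \<in> diagram (lam_odd b)"
    and right: "(i, j + 1) \<notin> gap_diagram b f" and below: "(i + 1, j) \<notin> gap_diagram b f"
  shows "gap_seq b (f(i := j))"
    and "gap_diagram b f - {(i, j)} \<union> {(i + 1, j + 1)} = gap_diagram b (f(i := j))"
proof -
  have ij: "1 \<le> i" "1 \<le> j" using c by (auto simp: gap_diagram_def)
  have fi: "f i = j + 1" "j + 1 \<le> f (i - 1)" using c right corner by (auto simp: mem_gap_diagram)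
  have next_row: "f (i + 1) \<le> j" using below corner fi ij by (auto simp: mem_gap_diagram)
  show "gap_seq b (f(i := j))"
    unfolding gap_seq_def decseq_Suc_iff
  proof (intro conjI allI)
    show "(f(i := j)) 0 = b + 1" using ij gap_seqD(1)[OF f] by simp
    fix k
    show "(f(i := j)) (Suc k) \<le> (f(i := j)) k"
      using gap_seqD(2)[OF f, of k] ij fi next_row by (cases "Suc k = i"; cases "k = i") auto
    show "1 \<le> (f(i := j)) k" "(f(i := j)) k \<le> staircase_gaps b k"
      using gap_seqD(3,4)[OF f, of k] ij fi by auto
  qed
  show "gap_diagram b f - {(i, j)} \<union> {(i + 1, j + 1)} = gap_diagram b (f(i := j))"
    using corner fi next_row ij by (auto simp: gap_diagram_def)
qed

lemma excited_imp_gap_diagram: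
  assumes "D \<in> excited (lam_odd b) (staircase b)"
  shows "\<exists>f. gap_seq b f \<and> D = gap_diagram b f"
  using assms
proof (induction rule: excited.induct)
  case base
  show ?case using gap_seq_staircase_gaps gap_diagram_staircase_gaps by metis
next
  case (step D i j)
  then obtain f where "gap_seq b f" "D = gap_diagram b f" by blast
  with step.hyps excited_move_gap_diagram[of b f i j] show ?case by blast
qed

lemma excited_move_gap_diagram_excited:
  assumes g: "gap_seq b g" and D: "gap_diagram b g \<in> excited (lam_odd b) (staircase b)"
    and ij: "1 \<le> i" "1 \<le> j" "i + j \<le> b + 1" and gi: "g i = j + 1" and next_row: "g (i + 1) \<le> j"
  shows "gap_diagram b (g(i := j)) \<in> excited (lam_odd b) (staircase b)"
proof -
  have "g i \<le> g (i - 1)" using gap_seq_antimono[OF g] by simp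
  then have move: "(i, j) \<in> gap_diagram b g" "(i + 1, j + 1) \<in> diagram (lam_odd b)"
    "(i, j + 1) \<notin> gap_diagram b g" "(i + 1, j) \<notin> gap_diagram b g"
    "(i + 1, j + 1) \<notin> gap_diagram b g"
    using ij gi next_row by (auto simp: mem_gap_diagram)
  with excited.step[OF D] have "gap_diagram b g - {(i, j)} \<union> {(i + 1, j + 1)} \<in> excited (lam_odd b) (staircase b)"
    by blast
  with excited_move_gap_diagram(2)[OF g move(1-4)] show ?thesis by simp
qed

lemma gap_seq_raise:
  assumes f: "gap_seq b f" and "f \<noteq> staircase_gaps b"
  obtains i where "1 \<le> i" "i + f i \<le> b + 1" "gap_seq b (f(i := f i + 1))"
proof -
  obtain i where i: "f i \<noteq> staircase_gaps b i"
    and below_i: "\<And>k. k < i \<Longrightarrow> f k = staircase_gaps b k"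
    using assms(2) exists_least_iff[of "\<lambda>i. f i \<noteq> staircase_gaps b i"] by blast
  have fi: "f i < staircase_gaps b i" using gap_seqD(4)[OF f, of i] i by simp
  have "i \<noteq> 0" using gap_seqD(1)[OF f] i by (cases i) (auto simp: staircase_gaps_def)
  moreover have "i \<le> b"
    by (rule ccontr) (use gap_seq_eq_1[OF f, of i] fi in \<open>auto simp: staircase_gaps_def\<close>)
  ultimately have i_range: "1 \<le> i" "i + f i \<le> b + 1"
    using fi by (auto simp: staircase_gaps_def)
  have "f i + 1 \<le> f (i - 1)"
    using below_i[of "i - 1"] i_range fi by (auto simp: staircase_gaps_def)
  have "gap_seq b (f(i := f i + 1))"
    unfolding gap_seq_def decseq_Suc_iff
  proof (intro conjI allI)
    show "(f(i := f i + 1)) 0 = b + 1" using i_range gap_seqD(1)[OF f] by simp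
    fix k
    show "(f(i := f i + 1)) (Suc k) \<le> (f(i := f i + 1)) k"
      using gap_seqD(2)[OF f, of k] \<open>f i + 1 \<le> f (i - 1)\<close> i_range
      by (cases "Suc k = i"; cases "k = i") auto
    show "1 \<le> (f(i := f i + 1)) k" "(f(i := f i + 1)) k \<le> staircase_gaps b k"
      using gap_seqD(3,4)[OF f, of k] fi by auto
  qed
  with i_range show thesis by (rule that)
qed

lemma gap_diagram_excited:
  assumes "gap_seq b f"
  shows "gap_diagram b f \<in> excited (lam_odd b) (staircase b)"
  using assms
proof (induction "\<Sum>i<b + 2. staircase_gaps b i - f i" arbitrary: f rule: less_induct)
  case less
  note f = less.prems
  show ?case
  proof (cases "f = staircase_gaps b")
    case True
    then show ?thesis using gap_diagram_staircase_gaps excited.base by metis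
  next
    case False
    with f obtain i where i: "1 \<le> i" "i + f i \<le> b + 1" and g: "gap_seq b (f(i := f i + 1))"
      by (rule gap_seq_raise)
    then have "f i < staircase_gaps b i" by (simp add: staircase_gaps_def)
    with i have "(\<Sum>k<b + 2. staircase_gaps b k - (f(i := f i + 1)) k)
        < (\<Sum>k<b + 2. staircase_gaps b k - f k)"
      by (intro sum_strict_mono_ex1) (auto intro!: bexI[of _ i])
    with less.hyps g have "gap_diagram b (f(i := f i + 1)) \<in> excited (lam_odd b) (staircase b)"
      by blast
    from excited_move_gap_diagram_excited[OF g this i(1) gap_seqD(3)[OF f] i(2)]
    show ?thesis using gap_seqD(2)[OF f, of i] by simp
  qed
qed

lemma excited_lam_odd: "excited (lam_odd b) (staircase b) = gap_diagram b ` {f. gap_seq b f}"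
  using excited_imp_gap_diagram gap_diagram_excited by blast

lemma inj_on_gap_diagram: "inj_on (gap_diagram b) {f. gap_seq b f}"
proof -
  have le: "f i \<le> g i" if f: "gap_seq b f" and g: "gap_seq b g"
    and eq: "gap_diagram b f = gap_diagram b g" for f g i
  proof (rule ccontr)
    assume lt: "\<not> f i \<le> g i"
    have "i \<noteq> 0" using lt gap_seqD(1)[OF f] gap_seqD(1)[OF g] by (cases i) auto
    moreover have "i \<le> b"
      by (rule ccontr) (use gap_seq_eq_1[OF f, of i] gap_seq_eq_1[OF g, of i] lt in auto)
    ultimately have "(i, g i) \<in> diagram (lam_odd b)"
      using lt gap_seqD(3,4)[OF f, of i] gap_seqD(3)[OF g, of i] by (auto simp: staircase_gaps_def)
    with lt have "(i, g i) \<in> gap_diagram b f" by (simp add: mem_gap_diagram)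
    moreover have "(i, g i) \<notin> gap_diagram b g"
      using gap_seq_antimono[OF g, of "i - 1" i] by (simp add: mem_gap_diagram)
    ultimately show False using eq by simp
  qed
  show ?thesis
  proof (rule inj_onI)
    fix f g assume "f \<in> {f. gap_seq b f}" "g \<in> {f. gap_seq b f}" "gap_diagram b f = gap_diagram b g"
    then show "f = g" by (intro ext antisym) (auto intro: le)
  qed
qed

lemma finite_gap_seqs: "finite {f. gap_seq b f}"
proof -
  have "gap_diagram b ` {f. gap_seq b f} \<subseteq> Pow (diagram (lam_odd b))"
    using gap_diagram_subset by blast
  then show ?thesis
    using inj_on_gap_diagram finite_diagram finite_imageD finite_subset by (metis finite_Pow_iff)
qed

definition lam_odd_hook :: "nat \<Rightarrow> cell \<Rightarrow> nat" where
  "lam_odd_hook b c = 2 * (b + 3 - fst c - snd c) + 1"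

lemma hook_lam_odd:
  assumes "c \<in> diagram (lam_odd b)" "2 \<le> fst c"
  shows "hook (lam_odd b) c = lam_odd_hook b c"
proof -
  obtain i j where c: "c = (i, j)" by fastforce
  have "{d \<in> diagram (lam_odd b). (fst d = i \<and> snd d \<ge> j) \<or> (snd d = j \<and> fst d \<ge> i)}
      = {i} \<times> {j..b + 3 - i} \<union> {i + 1..b + 3 - j} \<times> {j}"
    using assms by (auto simp: c)
  moreover have "card ({i} \<times> {j..b + 3 - i} \<union> {i + 1..b + 3 - j} \<times> {j})
      = card ({i} \<times> {j..b + 3 - i}) + card ({i + 1..b + 3 - j} \<times> {j})"
    by (rule card_Un_disjoint) auto
  ultimately show ?thesis
    using assms by (simp add: hook_def lam_odd_hook_def c card_cartesian_product) linarith
qed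

definition gap_weight :: "nat \<Rightarrow> (nat \<Rightarrow> nat) \<Rightarrow> nat" where
  "gap_weight b f = prod (lam_odd_hook b) {c \<in> gap_diagram b f. fst c \<noteq> 1}"

lemma card_first_row_gap_diagram:
  assumes "gap_seq b f"
  shows "card {c \<in> gap_diagram b f. fst c = 1} = f 1 - 1"
proof -
  have "f 1 \<le> b + 1" using gap_seqD(4)[OF assms, of 1] by (simp add: staircase_gaps_def)
  then have "{c \<in> gap_diagram b f. fst c = 1} = {1} \<times> {1..<f 1}"
    using gap_seqD(1)[OF assms] by (auto simp: gap_diagram_def)
  then show ?thesis by simp
qed

lemma NNcoeff_Iodd:
  assumes "j \<le> b"
  shows "NNcoeff j (Iodd b) = (\<Sum>f | gap_seq b f \<and> f 1 = b + 1 - j. gap_weight b f)"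
proof -
  have first_row: "card {c \<in> gap_diagram b f. fst c = 1} = b - j \<longleftrightarrow> f 1 = b + 1 - j"
    if "gap_seq b f" for f
    using card_first_row_gap_diagram[OF that] gap_seqD(3)[OF that, of 1] assms by auto
  have "{D \<in> excited (lam_odd b) (staircase b). card {c \<in> D. fst c = 1} = b - j}
      = gap_diagram b ` {f. gap_seq b f \<and> f 1 = b + 1 - j}"
    unfolding excited_lam_odd using first_row by auto
  moreover have "inj_on (gap_diagram b) {f. gap_seq b f \<and> f 1 = b + 1 - j}"
    by (rule inj_on_subset[OF inj_on_gap_diagram]) auto
  moreover have "(\<Prod>c \<in> {c \<in> gap_diagram b f. fst c \<noteq> 1}. hook (lam_odd b) c) = gap_weight b f"
    for f
    unfolding gap_weight_def
    by (rule prod.cong[OF refl], rule hook_lam_odd) (auto simp: gap_diagram_def)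
  ultimately show ?thesis
    by (simp add: NNcoeff_def lamI_Iodd muI_Iodd sI_Iodd sum.reindex)
qed

section \<open>Removing the first row\<close>

definition tail_gaps :: "nat \<Rightarrow> (nat \<Rightarrow> nat) \<Rightarrow> nat \<Rightarrow> nat" where
  "tail_gaps c f i = (if i = 0 then c + 1 else f (i + 1))"

definition cons_gaps :: "nat \<Rightarrow> nat \<Rightarrow> (nat \<Rightarrow> nat) \<Rightarrow> nat \<Rightarrow> nat" where
  "cons_gaps c r g i = (if i = 0 then c + 2 else if i = 1 then r else g (i - 1))"

lemma gap_seq_tail_gaps:
  assumes f: "gap_seq (Suc c) f"
  shows "gap_seq c (tail_gaps c f)"
  unfolding gap_seq_def decseq_Suc_iff
proof (intro conjI allI)
  show "tail_gaps c f 0 = c + 1" by (simp add: tail_gaps_def)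
  fix i
  show "tail_gaps c f (Suc i) \<le> tail_gaps c f i"
    using gap_seqD(2)[OF f, of "i + 1"] gap_seqD(4)[OF f, of 2]
    by (auto simp: tail_gaps_def staircase_gaps_def numeral_2_eq_2)
  show "1 \<le> tail_gaps c f i" "tail_gaps c f i \<le> staircase_gaps c i"
    using gap_seqD(3,4)[OF f, of "i + 1"] by (auto simp: tail_gaps_def staircase_gaps_def)
qed

lemma gap_seq_cons_gaps:
  assumes g: "gap_seq c g" and r: "g 1 \<le> r" "r \<le> c + 2"
  shows "gap_seq (Suc c) (cons_gaps c r g)"
  unfolding gap_seq_def decseq_Suc_iff
proof (intro conjI allI)
  show "cons_gaps c r g 0 = Suc c + 1" by (simp add: cons_gaps_def)
  fix i
  show "cons_gaps c r g (Suc i) \<le> cons_gaps c r g i"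
    using gap_seqD(2)[OF g, of "i - 1"] r by (cases i) (auto simp: cons_gaps_def)
  show "1 \<le> cons_gaps c r g i" "cons_gaps c r g i \<le> staircase_gaps (Suc c) i"
    using gap_seqD(3,4)[OF g, of "i - 1"] gap_seqD(3)[OF g, of 1] r
    by (auto simp: cons_gaps_def staircase_gaps_def)
qed

lemma mem_gap_diagram_tail_gaps:
  "2 \<le> i \<Longrightarrow> (i, j) \<in> gap_diagram c (tail_gaps c f) \<longleftrightarrow> (i + 1, j) \<in> gap_diagram (Suc c) f"
  by (auto simp: mem_gap_diagram tail_gaps_def)

lemma second_row_gap_diagram:
  assumes f: "gap_seq (Suc c) f"
  shows "{x \<in> gap_diagram (Suc c) f. fst x = 2}
    = (\<lambda>t. (2, c + 2 - t)) ` ({..<c + 2 - f 1} \<union> {c + 3 - f 2..c + 1})"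
proof -
  have "f 2 \<le> c + 1" using gap_seqD(4)[OF f, of 2] by (simp add: staircase_gaps_def)
  have "(2, j) \<in> gap_diagram (Suc c) f \<longleftrightarrow>
      j \<in> (\<lambda>t. c + 2 - t) ` ({..<c + 2 - f 1} \<union> {c + 3 - f 2..c + 1})" for j
  proof
    assume "(2, j) \<in> gap_diagram (Suc c) f"
    with \<open>f 2 \<le> c + 1\<close> have "c + 2 - j \<in> {..<c + 2 - f 1} \<union> {c + 3 - f 2..c + 1}" "j \<le> c + 2"
      by (auto simp: mem_gap_diagram)
    then show "j \<in> (\<lambda>t. c + 2 - t) ` ({..<c + 2 - f 1} \<union> {c + 3 - f 2..c + 1})"
      by (intro image_eqI[of _ _ "c + 2 - j"]) auto
  qed (use \<open>f 2 \<le> c + 1\<close> in \<open>auto simp: mem_gap_diagram\<close>)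
  then show ?thesis by force
qed

text \<open>The hook lengths of row 2 of an excited diagram for \<open>I\<^bsub>c+1\<^esub>\<close> whose first row has
  \<open>c + 1 - a\<close> cells and whose second row has \<open>c - m\<close> cells left of its gap.\<close>

definition row_two_weight :: "nat \<Rightarrow> nat \<Rightarrow> nat \<Rightarrow> nat" where
  "row_two_weight c a m = (\<Prod>t \<in> {..<a} \<union> {m + 2..c + 1}. 2 * t + 1)"

lemma gap_diagram_Suc_below_first_row:
  "{x \<in> gap_diagram (Suc c) f. fst x \<noteq> 1}
    = {x \<in> gap_diagram (Suc c) f. fst x = 2}
      \<union> (\<lambda>x. (fst x + 1, snd x)) ` {x \<in> gap_diagram c (tail_gaps c f). fst x \<noteq> 1}"
    (is "?below = ?row2 \<union> ?down ` ?lower")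
proof (intro set_eqI iffI)
  fix x assume x: "x \<in> ?below"
  show "x \<in> ?row2 \<union> ?down ` ?lower"
  proof (cases "fst x = 2")
    case False
    with x have "fst x \<ge> 3" by (auto simp: gap_diagram_def)
    with x have "(fst x - 1, snd x) \<in> ?lower" "x = ?down (fst x - 1, snd x)"
      using mem_gap_diagram_tail_gaps[of "fst x - 1" "snd x" c f] by auto
    then show ?thesis by blast
  qed (use x in simp)
next
  fix x assume "x \<in> ?row2 \<union> ?down ` ?lower"
  then show "x \<in> ?below"
  proof
    assume "x \<in> ?down ` ?lower"
    then obtain i j where "x = (i + 1, j)" "(i, j) \<in> ?lower" by auto
    moreover from this have "2 \<le> i" by (auto simp: gap_diagram_def)
    ultimately show ?thesis using mem_gap_diagram_tail_gaps[of i j c f] by simp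
  qed simp
qed

lemma gap_weight_Suc:
  assumes f: "gap_seq (Suc c) f"
  shows "gap_weight (Suc c) f
    = row_two_weight c (c + 2 - f 1) (c + 1 - f 2) * gap_weight c (tail_gaps c f)"
proof -
  let ?row2 = "{x \<in> gap_diagram (Suc c) f. fst x = 2}"
  let ?lower = "{x \<in> gap_diagram c (tail_gaps c f). fst x \<noteq> 1}"
  let ?down = "\<lambda>x :: cell. (fst x + 1, snd x)"
  have "prod (lam_odd_hook (Suc c)) (?down ` ?lower) = gap_weight c (tail_gaps c f)"
    by (subst prod.reindex) (auto simp: inj_on_def lam_odd_hook_def gap_weight_def ac_simps)
  moreover have "prod (lam_odd_hook (Suc c)) ?row2 = row_two_weight c (c + 2 - f 1) (c + 1 - f 2)"
  proof -
    have "f 2 \<le> c + 1" using gap_seqD(4)[OF f, of 2] by (simp add: staircase_gaps_def)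
    then have "prod (lam_odd_hook (Suc c)) ?row2
        = (\<Prod>t \<in> {..<c + 2 - f 1} \<union> {c + 3 - f 2..c + 1}. 2 * t + 1)"
      unfolding second_row_gap_diagram[OF f]
      by (subst prod.reindex) (auto simp: inj_on_def lam_odd_hook_def intro!: prod.cong)
    moreover have "c + 3 - f 2 = c + 1 - f 2 + 2" using \<open>f 2 \<le> c + 1\<close> by linarith
    ultimately show ?thesis by (simp only: row_two_weight_def)
  qed
  moreover have "?row2 \<inter> ?down ` ?lower = {}" by (auto simp: gap_diagram_def)
  ultimately show ?thesis
    unfolding gap_weight_def gap_diagram_Suc_below_first_row
    by (simp add: prod.union_disjoint finite_gap_diagram)
qed

lemma sum_gap_weight_Suc_tail:
  assumes a: "a \<le> c + 1"
  shows "(\<Sum>f | gap_seq (Suc c) f \<and> f 1 = c + 2 - a. gap_weight (Suc c) f)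
    = (\<Sum>g | gap_seq c g \<and> g 1 \<le> c + 2 - a. row_two_weight c a (c + 1 - g 1) * gap_weight c g)"
proof (rule sum.reindex_bij_witness[where i = "cons_gaps c (c + 2 - a)" and j = "tail_gaps c"])
  fix f assume "f \<in> {f. gap_seq (Suc c) f \<and> f 1 = c + 2 - a}"
  then have f: "gap_seq (Suc c) f" and f1: "f 1 = c + 2 - a" by auto
  show "cons_gaps c (c + 2 - a) (tail_gaps c f) = f"
    using gap_seqD(1)[OF f] f1 by (auto simp: cons_gaps_def tail_gaps_def)
  show "tail_gaps c f \<in> {g. gap_seq c g \<and> g 1 \<le> c + 2 - a}"
    using gap_seq_tail_gaps[OF f] gap_seqD(2)[OF f, of 1] f1
    by (simp add: tail_gaps_def numeral_2_eq_2)
  show "row_two_weight c a (c + 1 - tail_gaps c f 1) * gap_weight c (tail_gaps c f)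
      = gap_weight (Suc c) f"
    using gap_weight_Suc[OF f] f1 a by (simp add: tail_gaps_def numeral_2_eq_2)
next
  fix g assume "g \<in> {g. gap_seq c g \<and> g 1 \<le> c + 2 - a}"
  then have g: "gap_seq c g" and g1: "g 1 \<le> c + 2 - a" by auto
  show "tail_gaps c (cons_gaps c (c + 2 - a) g) = g"
    using gap_seqD(1)[OF g] by (auto simp: cons_gaps_def tail_gaps_def)
  show "cons_gaps c (c + 2 - a) g \<in> {f. gap_seq (Suc c) f \<and> f 1 = c + 2 - a}"
    using gap_seq_cons_gaps[OF g g1] by (simp add: cons_gaps_def)
qed

lemma sum_gap_weight_Suc:
  assumes a: "a \<le> c + 1"
  shows "(\<Sum>f | gap_seq (Suc c) f \<and> f 1 = c + 2 - a. gap_weight (Suc c) f)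
    = (\<Sum>m = a - 1..c. row_two_weight c a m * (\<Sum>g | gap_seq c g \<and> g 1 = c + 1 - m. gap_weight c g))"
proof -
  define T where "T = {g. gap_seq c g \<and> g 1 \<le> c + 2 - a}"
  have "(\<Sum>g \<in> T. row_two_weight c a (c + 1 - g 1) * gap_weight c g)
      = (\<Sum>m = a - 1..c. \<Sum>g | g \<in> T \<and> c + 1 - g 1 = m.
          row_two_weight c a (c + 1 - g 1) * gap_weight c g)"
  proof (rule sum.group[symmetric])
    show "finite T" by (rule finite_subset[OF _ finite_gap_seqs]) (auto simp: T_def)
    show "(\<lambda>g. c + 1 - g 1) ` T \<subseteq> {a - 1..c}"
    proof
      fix m assume "m \<in> (\<lambda>g. c + 1 - g 1) ` T"
      then obtain g where "g \<in> T" "m = c + 1 - g 1" by blast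
      then show "m \<in> {a - 1..c}" using gap_seqD(3)[of c g 1] by (auto simp: T_def)
    qed
  qed simp
  also have "\<dots> = (\<Sum>m = a - 1..c. row_two_weight c a m *
      (\<Sum>g | gap_seq c g \<and> g 1 = c + 1 - m. gap_weight c g))"
  proof (rule sum.cong[OF refl])
    fix m assume m: "m \<in> {a - 1..c}"
    have "{g. g \<in> T \<and> c + 1 - g 1 = m} = {g. gap_seq c g \<and> g 1 = c + 1 - m}"
      using m gap_seqD(3,4)[of c _ 1] by (force simp: T_def staircase_gaps_def)
    then show "(\<Sum>g | g \<in> T \<and> c + 1 - g 1 = m. row_two_weight c a (c + 1 - g 1) * gap_weight c g)
        = row_two_weight c a m * (\<Sum>g | gap_seq c g \<and> g 1 = c + 1 - m. gap_weight c g)"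
      using m by (simp add: sum_distrib_left)
  qed
  finally show ?thesis
    using sum_gap_weight_Suc_tail[OF a] by (simp add: T_def)
qed

lemma NNcoeff_Iodd_Suc:
  assumes "a \<le> c + 1"
  shows "NNcoeff a (Iodd (Suc c)) = (\<Sum>m = a - 1..c. row_two_weight c a m * NNcoeff m (Iodd c))"
proof -
  have "NNcoeff a (Iodd (Suc c)) = (\<Sum>f | gap_seq (Suc c) f \<and> f 1 = c + 2 - a. gap_weight (Suc c) f)"
    using NNcoeff_Iodd[of a "Suc c"] assms by simp
  also have "\<dots> = (\<Sum>m = a - 1..c. row_two_weight c a m *
      (\<Sum>g | gap_seq c g \<and> g 1 = c + 1 - m. gap_weight c g))"
    by (rule sum_gap_weight_Suc[OF assms])
  also have "\<dots> = (\<Sum>m = a - 1..c. row_two_weight c a m * NNcoeff m (Iodd c))"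
    by (intro sum.cong refl) (simp add: NNcoeff_Iodd)
  finally show ?thesis .
qed

lemma NNcoeff_Iodd_0: "NNcoeff 0 (Iodd 0) = 1"
proof -
  have "{f. gap_seq 0 f \<and> f 1 = 1} = {\<lambda>_. 1}"
  proof (intro set_eqI iffI)
    fix f assume "f \<in> {f. gap_seq 0 f \<and> f 1 = 1}"
    then have "f i = 1" for i
      using gap_seqD(3,4)[of 0 f i] by (auto simp: staircase_gaps_def split: if_splits)
    then show "f \<in> {\<lambda>_. 1}" by auto
  qed (auto simp: gap_seq_def staircase_gaps_def decseq_Suc_iff)
  moreover have "gap_diagram 0 (\<lambda>_. 1) = {}" by (auto simp: gap_diagram_def)
  ultimately show ?thesis by (simp add: NNcoeff_Iodd gap_weight_def)
qed

lemma dfact_odd: "dfact (2 * n - 1) = (\<Prod>t<n. 2 * t + 1)"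
proof -
  have "(2 * n - 1 + 1) div 2 = n" by (cases n) simp_all
  then have "dfact (2 * n - 1) = (\<Prod>i<n. 2 * n - 1 - 2 * i)" by (simp add: dfact_def)
  also have "\<dots> = (\<Prod>t<n. 2 * t + 1)"
    by (rule prod.reindex_bij_witness[where i = "\<lambda>t. n - 1 - t" and j = "\<lambda>t. n - 1 - t"]) auto
  finally show ?thesis .
qed

lemma row_two_weight_dfact:
  assumes "a \<le> m + 1" "m \<le> c"
  shows "row_two_weight c a m * dfact (2 * m + 3) = dfact (2 * a - 1) * dfact (2 * c + 3)"
proof -
  have dfact_Suc: "dfact (2 * n + 1) = (\<Prod>t<n + 1. 2 * t + 1)" for n
    using dfact_odd[of "n + 1"] by simp
  have "row_two_weight c a m = (\<Prod>t<a. 2 * t + 1) * (\<Prod>t = m + 2..c + 1. 2 * t + 1)"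
    unfolding row_two_weight_def using assms by (intro prod.union_disjoint) auto
  moreover have "(\<Prod>t = m + 2..c + 1. 2 * t + 1) * (\<Prod>t<m + 2. 2 * t + (1::nat)) = (\<Prod>t<c + 2. 2 * t + 1)"
  proof -
    have "{..<c + 2} = {..<m + 2} \<union> {m + 2..c + 1}" using assms by auto
    then show ?thesis by (simp add: prod.union_disjoint ivl_disj_int mult.commute)
  qed
  ultimately show ?thesis
    using dfact_Suc[of "m + 1"] dfact_Suc[of "c + 1"] dfact_odd[of a]
    by (simp add: numeral_eq_Suc mult_ac)
qed

lemma row_two_weight_real:
  assumes "a \<le> m + 1" "m \<le> c"
  shows "real (row_two_weight c a m)
    = real (dfact (2 * a - 1)) * (real (dfact (2 * c + 3)) / real (dfact (2 * m + 3)))"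
proof -
  have "0 < dfact (2 * m + 3)" unfolding dfact_def by (rule prod_pos) auto
  with row_two_weight_dfact[OF assms] show ?thesis
    by (simp add: field_simps flip: of_nat_mult)
qed

lemma row_two_weight_0: "row_two_weight c 0 m = row_two_weight c 1 m"
proof -
  have "{..<1} \<union> {m + 2..c + 1} = insert 0 {m + 2..c + 1}" by auto
  then show ?thesis by (simp add: row_two_weight_def)
qed

lemma NNcoeff_Iodd_recursion:
  assumes "1 \<le> b" "a \<le> b"
  shows "real (NNcoeff a (Iodd b)) = real (dfact (2 * a - 1)) *
    (\<Sum>i = a - 1..b - 1. real (NNcoeff i (Iodd (b - 1))) *
      (real (dfact (2 * b + 1)) / real (dfact (2 * i + 3))))"
proof -
  obtain c where b: "b = Suc c" using assms(1) by (cases b) auto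
  have "real (NNcoeff a (Iodd b))
      = (\<Sum>i = a - 1..c. real (row_two_weight c a i) * real (NNcoeff i (Iodd c)))"
    using NNcoeff_Iodd_Suc[of a c] assms b by simp
  also have "\<dots> = (\<Sum>i = a - 1..c. real (dfact (2 * a - 1)) * (real (NNcoeff i (Iodd c)) *
      (real (dfact (2 * b + 1)) / real (dfact (2 * i + 3)))))"
  proof (intro sum.cong refl)
    fix i assume "i \<in> {a - 1..c}"
    then have "real (row_two_weight c a i)
        = real (dfact (2 * a - 1)) * (real (dfact (2 * c + 3)) / real (dfact (2 * i + 3)))"
      by (intro row_two_weight_real) auto
    also have "2 * c + 3 = 2 * b + 1" using b by simp
    finally show "real (row_two_weight c a i) * real (NNcoeff i (Iodd c))
        = real (dfact (2 * a - 1)) * (real (NNcoeff i (Iodd c)) *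
          (real (dfact (2 * b + 1)) / real (dfact (2 * i + 3))))"
      by (simp only: mult_ac)
  qed
  finally show ?thesis by (simp add: sum_distrib_left b)
qed

lemma NNcoeff_0_Iodd_eq_NNcoeff_1: "1 \<le> b \<Longrightarrow> NNcoeff 0 (Iodd b) = NNcoeff 1 (Iodd b)"
  by (cases b) (simp_all add: NNcoeff_Iodd_Suc row_two_weight_0)

theorem proposition7p2:
  shows "NNcoeff 0 {1} = 1
    \<and> (\<forall>a b. 1 \<le> a \<and> a \<le> b \<longrightarrow>
         real (NNcoeff a (Iodd b)) =
           real (dfact (2 * a - 1)) *
           (\<Sum>i = a - 1..b - 1. real (NNcoeff i (Iodd (b - 1))) *
               (real (dfact (2 * b + 1)) / real (dfact (2 * i + 3)))))
    \<and> (\<forall>b \<ge> 1. NNcoeff 0 (Iodd b) = NNcoeff 1 (Iodd b))"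
proof (intro conjI allI impI)
  show "NNcoeff 0 {1} = 1"
    using NNcoeff_Iodd_0 by (simp add: Iodd_def)
qed (simp_all add: NNcoeff_Iodd_recursion NNcoeff_0_Iodd_eq_NNcoeff_1)

end
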